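(* Let $k_{11}>0$, $k_{22}>0$, $\mathbf{K}=\mathrm{diag}(k_{11},k_{22})$, $\mathbf{N}=\begin{pmatrix}0&\nu\\-\nu&0\end{pmatrix}$ with $\nu\in\mathbb{R}$, and let $\mathbf{D}'=\begin{pmatrix} d'_{11}&d'_{12}\\ d'_{12}&d'_{22}\end{pmatrix}$ be real symmetric positive definite. For $\varepsilon>0$ let $\nu^2_{\varepsilon}$ denote the supremum of those $\nu^2$ for which all roots of $\det(\lambda^2\mathbf{I}+\varepsilon\lambda\mathbf{D}'+\mathbf{K}+\mathbf{N})=0$ have negative real parts. Then: (i) $\lim_{\varepsilon\to0^+}\nu^2_\varepsilon=\nu_{cr}^2:=\dfrac{(k_{11}-k_{22})^2}{4}-\dfrac{(d'_{11}-d'_{22})^2(k_{11}-k_{22})^2}{4(d'_{11}+d'_{22})^2}$; (ii) in the undamped case, all roots of $\det(\lambda^2\mathbf{I}+\mathbf{K}+\mathbf{N})=0$ are purely imaginary and simple if and only if $\nu^2<\nu_0^2:=\dfrac{(k_{11}-k_{22})^2}{4}=\left(\dfrac{\mathrm{tr}\,\mathbf{K}}{2}\right)^2-\det\mathbf{K}$; (iii) $\nu_0^2-\nu_{cr}^2=\left[\dfrac{2\,\mathrm{tr}(\mathbf{K}\mathbf{D}')-\mathrm{tr}\,\mathbf{K}\,\mathrm{tr}\,\mathbf{D}'}{2\,\mathrm{tr}\,\mathbf{D}'}\right]^2\ge0$.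
   Context: $\mathbf{I}$ denotes the $2\times2$ identity matrix; $\mathrm{tr}$ denotes the trace. *)

theory Defs
  imports "HOL-Analysis.Analysis" "HOL-Computational_Algebra.Polynomial"
begin

definition mat2 :: "'a::zero \<Rightarrow> 'a \<Rightarrow> 'a \<Rightarrow> 'a \<Rightarrow> 'a^2^2" where
  "mat2 a b c d = vector [vector [a, b], vector [c, d]]"

definition Kmat :: "real \<Rightarrow> real \<Rightarrow> real^2^2" where
  "Kmat k11 k22 = mat2 k11 0 0 k22"

definition Nmat :: "real \<Rightarrow> real^2^2" where
  "Nmat \<nu> = mat2 0 \<nu> (- \<nu>) 0"

definition Dmat :: "real \<Rightarrow> real \<Rightarrow> real \<Rightarrow> real^2^2" where
  "Dmat d11 d12 d22 = mat2 d11 d12 d12 d22"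

definition charpoly :: "real \<Rightarrow> real^2^2 \<Rightarrow> real^2^2 \<Rightarrow> real^2^2 \<Rightarrow> complex poly" where
  "charpoly \<epsilon> D K N =
     det (\<chi> i j. [: complex_of_real (K $ i $ j + N $ i $ j),
                    complex_of_real (\<epsilon> * D $ i $ j),
                    complex_of_real (mat 1 $ i $ j) :] :: complex poly^2^2)"

definition all_roots_neg_re :: "complex poly \<Rightarrow> bool" where
  "all_roots_neg_re p \<longleftrightarrow> (\<forall>z. poly p z = 0 \<longrightarrow> Re z < 0)"

definition all_roots_imag_simple :: "complex poly \<Rightarrow> bool" where
  "all_roots_imag_simple p \<longleftrightarrow> (\<forall>z. poly p z = 0 \<longrightarrow> Re z = 0 \<and> order z p = 1)"

definition nu_sq_eps :: "real \<Rightarrow> real^2^2 \<Rightarrow> real \<Rightarrow> real \<Rightarrow> real" where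
  "nu_sq_eps \<epsilon> D k11 k22 =
     Sup {\<nu>^2 | \<nu>. all_roots_neg_re (charpoly \<epsilon> D (Kmat k11 k22) (Nmat \<nu>))}"

end

theory Submission
  imports Defs "HOL-Computational_Algebra.Fundamental_Theorem_Algebra"
begin

(* For eps > 0 the characteristic polynomial is the real monic quartic
     l^4 + eps tr D' l^3 + (tr K + eps^2 det D') l^2 + eps (d'11 k22 + d'22 k11) l + det K + nu^2.
   Writing a real monic quartic as a product (l^2 + a l + b)(l^2 + g l + d) of real quadratics
   (fundamental theorem of algebra), its Hurwitz determinant a1 a2 a3 - a3^2 - a1^2 a4 becomes
   a g ((b - d)^2 + a1 a3); this yields the Routh-Hurwitz criterion, which for the quartic above
   reads nu^2 < nu_cr^2 + eps^2 c with a constant c > 0. Hence nu_eps^2 = nu_cr^2 + eps^2 c.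
   For eps = 0 the polynomial is the biquadratic l^4 + tr K l^2 + det K + nu^2: its roots are
   simple and imaginary exactly when it has two distinct negative roots as a quadratic in l^2. *)

lemma quadratic_roots_Re_neg:
  fixes w :: complex
  assumes "\<alpha> > 0" "\<beta> > 0" "w^2 + of_real \<alpha> * w + of_real \<beta> = 0"
  shows "Re w < 0"
proof -
  obtain x y where w: "w = Complex x y" by (cases w)
  have re: "x^2 - y^2 + \<alpha>*x + \<beta> = 0" and im: "(2*x + \<alpha>) * y = 0"
    using assms(3) unfolding w by (simp_all add: complex_eq_iff power2_eq_square algebra_simps)
  show ?thesis
  proof (cases "y = 0")
    case True
    have "x < 0"
    proof (rule ccontr)
      assume "\<not> x < 0"
      then have "\<alpha>*x \<ge> 0" using assms(1) by simp
      then show False using re True assms(2) zero_le_power2[of x] by simp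
    qed
    then show ?thesis unfolding w by simp
  next
    case False
    then show ?thesis using im assms(1) unfolding w by simp
  qed
qed

lemma quadratic_stable_imp_coeffs_pos:
  assumes "\<forall>w::complex. w^2 + of_real \<alpha> * w + of_real \<beta> = 0 \<longrightarrow> Re w < 0"
  shows "\<alpha> > 0 \<and> \<beta> > 0"
proof (rule ccontr)
  assume nb: "\<not> (\<alpha> > 0 \<and> \<beta> > 0)"
  define disc where "disc = \<alpha>^2 - 4*\<beta>"
  show False
  proof (cases "disc \<ge> 0")
    case True
    define x where "x = (-\<alpha> + sqrt disc)/2"
    have "x^2 + \<alpha>*x + \<beta> = 0"
      using True unfolding x_def disc_def by (simp add: power2_eq_square field_simps)
    then have "(complex_of_real x)^2 + of_real \<alpha> * of_real x + of_real \<beta> = 0"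
      by (metis of_real_add of_real_mult of_real_power of_real_0)
    with assms have "sqrt disc < \<alpha>" unfolding x_def by fastforce
    moreover have "\<beta> \<le> 0 \<Longrightarrow> \<bar>\<alpha>\<bar> \<le> sqrt disc"
      using True unfolding disc_def by (intro real_le_rsqrt) (simp add: power2_abs)
    ultimately show False using nb True by (smt (verit) real_sqrt_ge_zero)
  next
    case False
    define w where "w = Complex (-\<alpha>/2) (sqrt (-disc)/2)"
    have "w^2 + of_real \<alpha> * w + of_real \<beta> = 0"
      using False unfolding w_def disc_def
      by (simp add: complex_eq_iff power2_eq_square field_simps)
    with assms have "\<alpha> > 0" unfolding w_def by fastforce
    moreover have "\<beta> > 0" using False unfolding disc_def by (smt (verit) zero_le_power2)
    ultimately show False using nb by blast
  qed
qed

definition monic_quartic :: "real \<Rightarrow> real \<Rightarrow> real \<Rightarrow> real \<Rightarrow> complex \<Rightarrow> complex" where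
  "monic_quartic a1 a2 a3 a4 z =
     z^4 + of_real a1 * z^3 + of_real a2 * z^2 + of_real a3 * z + of_real a4"

definition splits_into_real_quadratics :: "real \<Rightarrow> real \<Rightarrow> real \<Rightarrow> real \<Rightarrow> bool" where
  "splits_into_real_quadratics a1 a2 a3 a4 \<longleftrightarrow>
     (\<exists>\<alpha> \<beta> \<gamma> \<delta>. a1 = \<alpha> + \<gamma> \<and> a2 = \<beta> + \<alpha>*\<gamma> + \<delta> \<and> a3 = \<alpha>*\<delta> + \<gamma>*\<beta> \<and> a4 = \<beta>*\<delta>)"

lemma monic_quartic_factor:
  assumes "a1 = \<alpha> + \<gamma>" "a2 = \<beta> + \<alpha>*\<gamma> + \<delta>" "a3 = \<alpha>*\<delta> + \<gamma>*\<beta>" "a4 = \<beta>*\<delta>"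
  shows "monic_quartic a1 a2 a3 a4 z =
           (z^2 + of_real \<alpha> * z + of_real \<beta>) * (z^2 + of_real \<gamma> * z + of_real \<delta>)"
  unfolding monic_quartic_def assms
  by (simp add: algebra_simps power2_eq_square power3_eq_cube power4_eq_xxxx)

text \<open>A non-real root \<open>z\<close> provides the factor \<open>(\<lambda> - z)(\<lambda> - z\<^sup>*)\<close>: the remainder of the division
  by it is a real linear polynomial vanishing at \<open>z\<close>, hence zero.\<close>
lemma splits_into_real_quadratics_nonreal_root:
  assumes root: "monic_quartic a1 a2 a3 a4 z = 0" and nonreal: "Im z \<noteq> 0"
  shows "splits_into_real_quadratics a1 a2 a3 a4"
proof -
  define \<alpha> where "\<alpha> = -2 * Re z"
  define \<beta> where "\<beta> = Re z ^ 2 + Im z ^ 2"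
  define \<gamma> where "\<gamma> = a1 - \<alpha>"
  define \<delta> where "\<delta> = a2 - \<beta> - \<alpha>*\<gamma>"
  define A where "A = a3 - \<alpha>*\<delta> - \<gamma>*\<beta>"
  define B where "B = a4 - \<beta>*\<delta>"
  have division: "monic_quartic a1 a2 a3 a4 z
      = (z^2 + of_real \<alpha> * z + of_real \<beta>) * (z^2 + of_real \<gamma> * z + of_real \<delta>)
        + of_real A * z + of_real B"
    unfolding monic_quartic_def A_def B_def \<delta>_def \<gamma>_def
    by (simp add: algebra_simps power2_eq_square power3_eq_cube power4_eq_xxxx)
  have "z^2 + of_real \<alpha> * z + of_real \<beta> = 0"
    unfolding \<alpha>_def \<beta>_def by (simp add: complex_eq_iff power2_eq_square algebra_simps)
  with root division have "of_real A * z + of_real B = 0" by simp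
  then have "A = 0" "B = 0" using nonreal by (auto simp: complex_eq_iff)
  then show ?thesis
    unfolding splits_into_real_quadratics_def A_def B_def \<gamma>_def \<delta>_def
    by (intro exI[of _ \<alpha>] exI[of _ \<beta>] exI[of _ "a1 - \<alpha>"] exI[of _ "a2 - \<beta> - \<alpha>*(a1 - \<alpha>)"]) simp
qed

lemma complex_cubic_has_root:
  "\<exists>w::complex. w^3 + of_real c2 * w^2 + of_real c1 * w + of_real c0 = 0"
proof -
  define c :: "complex poly" where "c = [:of_real c0, of_real c1, of_real c2, 1:]"
  have "\<not> constant (poly c)" unfolding constant_degree c_def by simp
  then obtain w where "poly c w = 0" using fundamental_theorem_of_algebra by blast
  then show ?thesis unfolding c_def by (auto simp: algebra_simps power2_eq_square power3_eq_cube)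
qed

lemma splits_into_real_quadratics_real_root:
  assumes root: "monic_quartic a1 a2 a3 a4 (of_real r1) = 0"
  shows "splits_into_real_quadratics a1 a2 a3 a4"
proof -
  define c2 where "c2 = a1 + r1"
  define c1 where "c1 = a2 + r1*c2"
  define c0 where "c0 = a3 + r1*c1"
  have "of_real (r1^4 + a1*r1^3 + a2*r1^2 + a3*r1 + a4) = (0::complex)"
    using root unfolding monic_quartic_def by simp
  then have "r1^4 + a1*r1^3 + a2*r1^2 + a3*r1 + a4 = 0" by (simp only: of_real_eq_0_iff)
  then have a4: "a4 = - r1*c0" unfolding c0_def c1_def c2_def
    by (simp add: algebra_simps power2_eq_square power3_eq_cube power4_eq_xxxx)
  have deflation: "monic_quartic a1 a2 a3 a4 l
      = (l - of_real r1) * (l^3 + of_real c2 * l^2 + of_real c1 * l + of_real c0)" for l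
    unfolding monic_quartic_def a4 c0_def c1_def c2_def
    by (simp add: algebra_simps power2_eq_square power3_eq_cube power4_eq_xxxx)
  obtain w :: complex where cubic: "w^3 + of_real c2 * w^2 + of_real c1 * w + of_real c0 = 0"
    using complex_cubic_has_root by blast
  show ?thesis
  proof (cases "Im w = 0")
    case False
    then show ?thesis using deflation[of w] cubic splits_into_real_quadratics_nonreal_root by simp
  next
    case True
    define r2 where "r2 = Re w"
    have "w = of_real r2" using True unfolding r2_def by (simp add: complex_eq_iff)
    then have "of_real (r2^3 + c2*r2^2 + c1*r2 + c0) = (0::complex)" using cubic by simp
    then have "r2^3 + c2*r2^2 + c1*r2 + c0 = 0" by (simp only: of_real_eq_0_iff)
    then have c0: "c0 = - r2*(c1 + r2*(c2 + r2))"
      by (simp add: algebra_simps power2_eq_square power3_eq_cube)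
    have "a1 = c2 - r1" "a2 = c1 - r1*c2" "a3 = c0 - r1*c1"
      unfolding c0_def c1_def c2_def by simp_all
    then show ?thesis
      unfolding splits_into_real_quadratics_def a4 c0
      by (intro exI[of _ "-(r1+r2)"] exI[of _ "r1*r2"] exI[of _ "c2 + r2"]
            exI[of _ "c1 + r2*(c2 + r2)"]) (simp add: algebra_simps)
  qed
qed

lemma real_quartic_splits_into_real_quadratics: "splits_into_real_quadratics a1 a2 a3 a4"
proof -
  define p :: "complex poly" where "p = [:of_real a4, of_real a3, of_real a2, of_real a1, 1:]"
  have "\<not> constant (poly p)" unfolding constant_degree p_def by simp
  then obtain z where "poly p z = 0" using fundamental_theorem_of_algebra by blast
  then have root: "monic_quartic a1 a2 a3 a4 z = 0" unfolding p_def monic_quartic_def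
    by (simp add: algebra_simps power2_eq_square power3_eq_cube power4_eq_xxxx)
  show ?thesis
  proof (cases "Im z = 0")
    case True
    then have "z = of_real (Re z)" by (simp add: complex_eq_iff)
    then show ?thesis using root splits_into_real_quadratics_real_root by metis
  next
    case False
    then show ?thesis using root splits_into_real_quadratics_nonreal_root by blast
  qed
qed

lemma quartic_Hurwitz_criterion:
  assumes a1: "a1 > 0" and a3: "a3 > 0" and a4: "a4 > 0"
  shows "(\<forall>z. monic_quartic a1 a2 a3 a4 z = 0 \<longrightarrow> Re z < 0) \<longleftrightarrow> a1*a2*a3 - a3^2 - a1^2*a4 > 0"
proof -
  obtain \<alpha> \<beta> \<gamma> \<delta> where e1: "a1 = \<alpha> + \<gamma>" and e2: "a2 = \<beta> + \<alpha>*\<gamma> + \<delta>"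
    and e3: "a3 = \<alpha>*\<delta> + \<gamma>*\<beta>" and e4: "a4 = \<beta>*\<delta>"
    using real_quartic_splits_into_real_quadratics
    unfolding splits_into_real_quadratics_def by blast
  note factor = monic_quartic_factor[OF e1 e2 e3 e4]
  have Hurwitz: "a1*a2*a3 - a3^2 - a1^2*a4 = \<alpha>*\<gamma>*((\<beta>-\<delta>)^2 + a1*a3)"
    unfolding e1 e2 e3 e4 by (simp add: algebra_simps power2_eq_square)
  have cofactor_pos: "(\<beta>-\<delta>)^2 + a1*a3 > 0" using a1 a3 by (simp add: add_nonneg_pos)
  show ?thesis
  proof
    assume "\<forall>z. monic_quartic a1 a2 a3 a4 z = 0 \<longrightarrow> Re z < 0"
    then have "\<alpha> > 0 \<and> \<beta> > 0" "\<gamma> > 0 \<and> \<delta> > 0"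
      by (auto simp: factor intro!: quadratic_stable_imp_coeffs_pos)
    then show "a1*a2*a3 - a3^2 - a1^2*a4 > 0" unfolding Hurwitz using cofactor_pos by simp
  next
    assume "a1*a2*a3 - a3^2 - a1^2*a4 > 0"
    then have "\<alpha>*\<gamma> > 0" unfolding Hurwitz using cofactor_pos by (simp add: zero_less_mult_iff)
    then have "\<alpha> > 0" "\<gamma> > 0" using a1 unfolding e1 by (auto simp: zero_less_mult_iff)
    moreover have "\<beta> > 0" "\<delta> > 0"
    proof -
      have "\<not> (\<beta> < 0 \<and> \<delta> < 0)"
        using \<open>\<alpha> > 0\<close> \<open>\<gamma> > 0\<close> a3 e3 by (smt (verit) mult_pos_neg)
      with a4 e4 show "\<beta> > 0" "\<delta> > 0" by (auto simp: zero_less_mult_iff)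
    qed
    ultimately show "\<forall>z. monic_quartic a1 a2 a3 a4 z = 0 \<longrightarrow> Re z < 0"
      using quadratic_roots_Re_neg by (auto simp: factor)
  qed
qed

lemma charpoly_Dmat_Kmat_Nmat:
  "charpoly \<epsilon> (Dmat d11 d12 d22) (Kmat k11 k22) (Nmat \<nu>) =
    [:of_real (k11*k22 + \<nu>^2), of_real (\<epsilon>*(d11*k22 + d22*k11)),
      of_real (k11 + k22 + \<epsilon>^2*(d11*d22 - d12^2)), of_real (\<epsilon>*(d11 + d22)), 1:]"
proof -
  have "charpoly \<epsilon> (Dmat d11 d12 d22) (Kmat k11 k22) (Nmat \<nu>) =
     [:of_real k11, of_real (\<epsilon>*d11), 1:] * [:of_real k22, of_real (\<epsilon>*d22), 1:]
     - [:of_real \<nu>, of_real (\<epsilon>*d12), 0:] * [:of_real (-\<nu>), of_real (\<epsilon>*d12), 0:]"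
    unfolding charpoly_def det_2 Kmat_def Nmat_def Dmat_def mat2_def by (simp add: mat_def)
  then show ?thesis by (simp add: algebra_simps power2_eq_square)
qed

lemma poly_charpoly_Dmat_Kmat_Nmat:
  "poly (charpoly \<epsilon> (Dmat d11 d12 d22) (Kmat k11 k22) (Nmat \<nu>)) z =
     monic_quartic (\<epsilon>*(d11 + d22)) (k11 + k22 + \<epsilon>^2*(d11*d22 - d12^2))
       (\<epsilon>*(d11*k22 + d22*k11)) (k11*k22 + \<nu>^2) z"
  unfolding charpoly_Dmat_Kmat_Nmat monic_quartic_def
  by (simp add: algebra_simps power2_eq_square power3_eq_cube power4_eq_xxxx)

lemma Dmat_quadratic_form:
  "(vector [a, b] :: real^2) \<bullet> (Dmat d11 d12 d22 *v vector [a, b]) = d11*a^2 + 2*d12*a*b + d22*b^2"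
  unfolding Dmat_def mat2_def
  by (simp add: matrix_vector_mult_def inner_vec_def sum_2 power2_eq_square algebra_simps)

lemma Dmat_posdefD:
  assumes posdef: "\<forall>x::real^2. x \<noteq> 0 \<longrightarrow> x \<bullet> (Dmat d11 d12 d22 *v x) > 0"
  shows "d11 > 0" "d22 > 0" "d11*d22 - d12^2 > 0"
proof -
  have nonzero: "(vector [a, b] :: real^2) \<noteq> 0 \<longleftrightarrow> a \<noteq> 0 \<or> b \<noteq> 0" for a b
    by (auto simp: vec_eq_iff forall_2)
  show "d11 > 0" using posdef[rule_format, of "vector [1,0]"] by (simp add: Dmat_quadratic_form nonzero)
  show "d22 > 0" using posdef[rule_format, of "vector [0,1]"] by (simp add: Dmat_quadratic_form nonzero)
  have "d11*(d11*d22 - d12^2) > 0"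
    using posdef[rule_format, of "vector [d12,-d11]"] \<open>d11 > 0\<close>
    by (simp add: Dmat_quadratic_form nonzero algebra_simps power2_eq_square)
  then show "d11*d22 - d12^2 > 0" using \<open>d11 > 0\<close> by (simp add: zero_less_mult_iff)
qed

lemma charpoly_stable_iff:
  assumes k: "k11 > 0" "k22 > 0" and d: "d11 > 0" "d22 > 0" "d11*d22 - d12^2 > 0"
    and \<epsilon>: "\<epsilon> > 0"
  shows "all_roots_neg_re (charpoly \<epsilon> (Dmat d11 d12 d22) (Kmat k11 k22) (Nmat \<nu>)) \<longleftrightarrow>
    \<nu>^2 < (k11 - k22)^2*d11*d22/(d11 + d22)^2
           + \<epsilon>^2 * ((d11*k22 + d22*k11)*(d11*d22 - d12^2)/(d11 + d22))"
proof -
  define t where "t = d11 + d22"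
  define p where "p = d11*k22 + d22*k11"
  define a2 where "a2 = k11 + k22 + \<epsilon>^2*(d11*d22 - d12^2)"
  define a4 where "a4 = k11*k22 + \<nu>^2"
  have t: "t > 0" unfolding t_def using d by simp
  have "p > 0" unfolding p_def using d k by (simp add: add_pos_pos)
  moreover have "a4 > 0" unfolding a4_def using k by (simp add: add_pos_nonneg)
  ultimately have "all_roots_neg_re (charpoly \<epsilon> (Dmat d11 d12 d22) (Kmat k11 k22) (Nmat \<nu>))
      \<longleftrightarrow> (\<epsilon>*t)*a2*(\<epsilon>*p) - (\<epsilon>*p)^2 - (\<epsilon>*t)^2*a4 > 0"
    unfolding all_roots_neg_re_def poly_charpoly_Dmat_Kmat_Nmat t_def[symmetric]
      p_def[symmetric] a2_def[symmetric] a4_def[symmetric]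
    using \<epsilon> t by (intro quartic_Hurwitz_criterion) auto
  also have "(\<epsilon>*t)*a2*(\<epsilon>*p) - (\<epsilon>*p)^2 - (\<epsilon>*t)^2*a4
      = \<epsilon>^2 * ((t*p*(k11 + k22) - p^2 - t^2*(k11*k22)) + \<epsilon>^2*t*p*(d11*d22 - d12^2) - t^2*\<nu>^2)"
    unfolding a2_def a4_def by (simp add: algebra_simps power2_eq_square)
  also have "t*p*(k11 + k22) - p^2 - t^2*(k11*k22) = (k11 - k22)^2*d11*d22"
    unfolding t_def p_def by algebra
  also have "\<epsilon>^2 * ((k11 - k22)^2*d11*d22 + \<epsilon>^2*t*p*(d11*d22 - d12^2) - t^2*\<nu>^2)
      = (\<epsilon>*t)^2 * ((k11 - k22)^2*d11*d22/t^2 + \<epsilon>^2*(p*(d11*d22 - d12^2)/t) - \<nu>^2)"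
    using t by (simp add: field_simps power2_eq_square)
  also have "0 < \<dots> \<longleftrightarrow> \<nu>^2 < (k11 - k22)^2*d11*d22/t^2 + \<epsilon>^2*(p*(d11*d22 - d12^2)/t)"
    using \<epsilon> t by (simp add: zero_less_mult_iff)
  finally show ?thesis unfolding t_def p_def .
qed

lemma order_eq_1_iff_pderiv:
  fixes p :: "'a::{idom,semiring_char_0} poly"
  assumes "p \<noteq> 0" "poly p z = 0" "pderiv p \<noteq> 0"
  shows "order z p = 1 \<longleftrightarrow> poly (pderiv p) z \<noteq> 0"
  using order_pderiv[OF assms(1,2)] order_root[of "pderiv p" z] assms(3) by auto

definition biquadratic :: "real \<Rightarrow> real \<Rightarrow> complex poly" where
  "biquadratic s c = [:of_real c, 0, of_real s, 0, 1:]"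

lemma biquadratic_nonzero: "biquadratic s c \<noteq> 0"
  and pderiv_biquadratic_nonzero: "pderiv (biquadratic s c) \<noteq> 0"
  by (simp_all add: biquadratic_def pderiv_pCons)

lemma poly_biquadratic: "poly (biquadratic s c) z = (z^2)^2 + of_real s * z^2 + of_real c"
  unfolding biquadratic_def by (simp add: algebra_simps power2_eq_square)

lemma poly_pderiv_biquadratic: "poly (pderiv (biquadratic s c)) z = 2*z*(2*z^2 + of_real s)"
  unfolding biquadratic_def by (simp add: pderiv_pCons algebra_simps power2_eq_square)

lemma biquadratic_imag_simple:
  assumes s: "s > 0" and c: "c > 0" and disc: "s^2 > 4*c"
  shows "all_roots_imag_simple (biquadratic s c)"
  unfolding all_roots_imag_simple_def
proof (intro allI impI)
  fix z assume root: "poly (biquadratic s c) z = 0"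
  define sd where "sd = sqrt (s^2 - 4*c)"
  have sd: "sd > 0" "sd^2 = s^2 - 4*c" unfolding sd_def using disc by simp_all
  have "sd < s" using sd s c by (smt (verit) power_mono zero_le_power2)
  define m1 where "m1 = (-s + sd)/2"
  define m2 where "m2 = (-s - sd)/2"
  have coeffs: "c = m1*m2" "s = -(m1 + m2)"
    using sd(2) unfolding m1_def m2_def by (simp_all add: field_simps power2_eq_square)
  have "poly (biquadratic s c) z = (z^2 - of_real m1) * (z^2 - of_real m2)"
    unfolding poly_biquadratic coeffs by (simp add: algebra_simps power2_eq_square)
  with root obtain m where m: "m = m1 \<or> m = m2" and zm: "z^2 = of_real m" by auto
  have "m < 0" "2*m + s \<noteq> 0" using m \<open>sd < s\<close> sd unfolding m1_def m2_def by auto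
  obtain x y where z: "z = Complex x y" by (cases z)
  have "x^2 - y^2 = m" "x*y = 0" using zm unfolding z by (simp_all add: complex_eq_iff power2_eq_square)
  then have "Re z = 0" unfolding z using \<open>m < 0\<close> by (auto simp: power2_eq_square)
  have "z \<noteq> 0" using root c by (auto simp: poly_biquadratic)
  moreover have "2*z^2 + of_real s \<noteq> 0"
    unfolding zm using \<open>2*m + s \<noteq> 0\<close> by (metis of_real_add of_real_mult of_real_numeral of_real_eq_0_iff)
  ultimately have "poly (pderiv (biquadratic s c)) z \<noteq> 0" by (simp add: poly_pderiv_biquadratic)
  then show "Re z = 0 \<and> order z (biquadratic s c) = 1"
    using \<open>Re z = 0\<close> order_eq_1_iff_pderiv[OF biquadratic_nonzero root pderiv_biquadratic_nonzero]
    by simp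
qed

lemma biquadratic_not_imag_simple:
  assumes s: "s > 0" and disc: "s^2 \<le> 4*c"
  shows "\<not> all_roots_imag_simple (biquadratic s c)"
proof (cases "s^2 = 4*c")
  case True
  define z where "z = Complex 0 (sqrt (s/2))"
  have z2: "z^2 = - of_real (s/2)" unfolding z_def using s by (simp add: complex_eq_iff power2_eq_square)
  have "poly (biquadratic s c) z = of_real ((s/2)^2 - s*(s/2) + c)"
    unfolding poly_biquadratic z2 by (simp add: power2_eq_square)
  also have "(s/2)^2 - s*(s/2) + c = 0" using True by (simp add: field_simps power2_eq_square)
  finally have "poly (biquadratic s c) z = 0" by simp
  moreover have "poly (pderiv (biquadratic s c)) z = 0" unfolding poly_pderiv_biquadratic z2 by simp
  ultimately show ?thesis
    using order_eq_1_iff_pderiv[OF biquadratic_nonzero _ pderiv_biquadratic_nonzero]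
    unfolding all_roots_imag_simple_def by blast
next
  case False
  then have disc: "s^2 < 4*c" using disc by simp
  have "\<not> constant (poly (biquadratic s c))" unfolding constant_degree biquadratic_def by simp
  then obtain z where root: "poly (biquadratic s c) z = 0" using fundamental_theorem_of_algebra by blast
  have "Re z \<noteq> 0"
  proof
    assume "Re z = 0"
    define y where "y = (Im z)^2"
    have "z^2 = of_real (- y)" using \<open>Re z = 0\<close> unfolding y_def
      by (simp add: complex_eq_iff power2_eq_square)
    then have "of_real (y^2 - s*y + c) = (0::complex)"
      using root by (simp add: poly_biquadratic power2_eq_square)
    then have "y^2 - s*y + c = 0" by (simp only: of_real_eq_0_iff)
    moreover have "y^2 - s*y + c = (y - s/2)^2 + (c - s^2/4)"
      by (simp add: power2_eq_square field_simps)
    ultimately show False using disc zero_le_power2[of "y - s/2"] by linarith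
  qed
  with root show ?thesis unfolding all_roots_imag_simple_def by blast
qed

lemma charpoly_undamped:
  "charpoly 0 (Dmat d11 d12 d22) (Kmat k11 k22) (Nmat \<nu>) = biquadratic (k11 + k22) (k11*k22 + \<nu>^2)"
  unfolding charpoly_Dmat_Kmat_Nmat biquadratic_def by simp

lemma undamped_imag_simple_iff:
  assumes "k11 > 0" "k22 > 0"
  shows "all_roots_imag_simple (charpoly 0 (Dmat d11 d12 d22) (Kmat k11 k22) (Nmat \<nu>))
           \<longleftrightarrow> \<nu>^2 < (k11 - k22)^2/4"
proof -
  have "\<nu>^2 < (k11 - k22)^2/4 \<longleftrightarrow> (k11 + k22)^2 > 4*(k11*k22 + \<nu>^2)"
    by (simp add: algebra_simps power2_eq_square)
  moreover have "k11*k22 + \<nu>^2 > 0" using assms by (simp add: add_pos_nonneg)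
  ultimately show ?thesis unfolding charpoly_undamped using assms
    by (metis add_pos_pos biquadratic_imag_simple biquadratic_not_imag_simple not_less)
qed

lemma Sup_squares_less:
  assumes "b > 0"
  shows "Sup {x^2 | x::real. x^2 < b} = b"
proof -
  have "{x^2 | x::real. x^2 < b} = {0..<b}"
  proof (intro set_eqI iffI)
    fix y assume "y \<in> {0..<b}"
    then have "y = (sqrt y)^2" "(sqrt y)^2 < b" by simp_all
    then show "y \<in> {x^2 | x. x^2 < b}" by blast
  qed auto
  then show ?thesis using assms by simp
qed

lemma nu_sq_eps_Dmat:
  assumes k: "k11 > 0" "k22 > 0" and d: "d11 > 0" "d22 > 0" "d11*d22 - d12^2 > 0"
    and \<epsilon>: "\<epsilon> > 0"
  shows "nu_sq_eps \<epsilon> (Dmat d11 d12 d22) k11 k22 =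
    (k11 - k22)^2*d11*d22/(d11 + d22)^2
      + \<epsilon>^2 * ((d11*k22 + d22*k11)*(d11*d22 - d12^2)/(d11 + d22))"
  unfolding nu_sq_eps_def charpoly_stable_iff[OF k d \<epsilon>]
  using k d \<epsilon> by (intro Sup_squares_less add_nonneg_pos) (simp_all add: add_pos_pos)

lemma nu_sq_eps_tendsto:
  assumes k: "k11 > 0" "k22 > 0" and d: "d11 > 0" "d22 > 0" "d11*d22 - d12^2 > 0"
  shows "((\<lambda>\<epsilon>. nu_sq_eps \<epsilon> (Dmat d11 d12 d22) k11 k22)
           \<longlongrightarrow> (k11 - k22)^2*d11*d22/(d11 + d22)^2) (at_right 0)"
proof -
  define c where "c = (d11*k22 + d22*k11)*(d11*d22 - d12^2)/(d11 + d22)"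
  define \<nu>\<^sub>c\<^sub>r where "\<nu>\<^sub>c\<^sub>r = (k11 - k22)^2*d11*d22/(d11 + d22)^2"
  have "((\<lambda>\<epsilon>. \<nu>\<^sub>c\<^sub>r + \<epsilon>^2 * c) \<longlongrightarrow> \<nu>\<^sub>c\<^sub>r + 0^2 * c) (at_right 0)"
    by (intro tendsto_intros)
  then have "((\<lambda>\<epsilon>. \<nu>\<^sub>c\<^sub>r + \<epsilon>^2 * c) \<longlongrightarrow> \<nu>\<^sub>c\<^sub>r) (at_right 0)" by simp
  moreover have eventually_eq:
    "\<forall>\<^sub>F \<epsilon> in at_right 0. nu_sq_eps \<epsilon> (Dmat d11 d12 d22) k11 k22 = \<nu>\<^sub>c\<^sub>r + \<epsilon>^2 * c"
    using eventually_at_right_less[of "0::real"]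
    by (rule eventually_mono) (simp add: nu_sq_eps_Dmat[OF k d] c_def \<nu>\<^sub>c\<^sub>r_def)
  ultimately show ?thesis unfolding \<nu>\<^sub>c\<^sub>r_def[symmetric] using tendsto_cong[OF eventually_eq] by blast
qed

theorem mainTheorem5:
  fixes k11 k22 d11 d12 d22 :: real
  assumes "k11 > 0" and "k22 > 0"
    and posdef: "\<forall>x::real^2. x \<noteq> 0 \<longrightarrow> x \<bullet> (Dmat d11 d12 d22 *v x) > 0"
  defines "K \<equiv> Kmat k11 k22" and "D \<equiv> Dmat d11 d12 d22"
    and "nu_cr_sq \<equiv> (k11 - k22)^2 / 4
                      - (d11 - d22)^2 * (k11 - k22)^2 / (4 * (d11 + d22)^2)"
    and "nu0_sq \<equiv> (k11 - k22)^2 / 4"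
  shows "(((\<lambda>\<epsilon>. nu_sq_eps \<epsilon> D k11 k22) \<longlongrightarrow> nu_cr_sq) (at_right 0))
       \<and> (nu0_sq = (trace K / 2)^2 - det K)
       \<and> (\<forall>\<nu>::real. all_roots_imag_simple (charpoly 0 D K (Nmat \<nu>)) \<longleftrightarrow> \<nu>^2 < nu0_sq)
       \<and> (nu0_sq - nu_cr_sq
           = ((2 * trace (K ** D) - trace K * trace D) / (2 * trace D))^2)
       \<and> (nu0_sq - nu_cr_sq \<ge> 0)"
proof -
  note k = assms(1,2)
  note d = Dmat_posdefD[OF posdef]
  have t: "d11 + d22 > 0" using d by simp
  have nu_cr: "nu_cr_sq = (k11 - k22)^2*d11*d22/(d11 + d22)^2"
    unfolding nu_cr_sq_def using t by (simp add: field_simps) algebra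
  have traces: "trace K = k11 + k22" "trace D = d11 + d22" "trace (K ** D) = k11*d11 + k22*d22"
    unfolding K_def D_def Kmat_def Dmat_def mat2_def trace_def sum_2 matrix_matrix_mult_def by simp_all
  have "det K = k11*k22" unfolding K_def Kmat_def mat2_def det_2 by simp
  then have nu0: "nu0_sq = (trace K / 2)^2 - det K"
    unfolding nu0_sq_def traces by (simp add: field_simps power2_eq_square)
  have gap: "nu0_sq - nu_cr_sq = ((2 * trace (K ** D) - trace K * trace D) / (2 * trace D))^2"
    unfolding nu0_sq_def nu_cr traces using t by (simp add: field_simps) algebra
  show ?thesis
    using nu_sq_eps_tendsto[OF k d] nu0 gap undamped_imag_simple_iff[OF k]
    unfolding D_def K_def nu0_sq_def nu_cr by simp
qed

end
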